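(* Let $0<\delta<1/1000$, let $x$ be large, let $D=x^{7/12-50\delta}$, let $x^{2\delta} \le N\le x^{1/3+\delta/2}$ and let $d\in\mathcal{D}^+(D)$. Then there is a factorization $d=d_1d_2d_3$ into positive integers such that \begin{align*} d_1&\le\frac{N}{x^\delta},\\ N^2d_2d_3^2&\le x^{1-\delta},\\ N^2d_1d_2^4d_3^3&\le x^{2-\delta},\\ N d_1d_2^5d_3^2&\le x^{2-\delta}. \end{align*}
   Context: For $D\ge 1$, the support set of the upper bound linear sieve weights of level $D$ is \[ \mathcal{D}^+(D):=\Bigl\{p_1\cdots p_r:\ p_1\ge p_2\ge \dots \ge p_r \text{ primes},\ \ p_1\cdots p_{2j}\,p_{2j+1}^3\le D\ \text{ for all } 0\le j<r/2\Bigr\} \] (with $r\ge 0$, the empty product being $1$). *)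

theory Defs
  imports "HOL-Computational_Algebra.Primes" Complex_Main
begin

text \<open>Support set of the upper bound linear sieve weights of level D:
  products p_1 ... p_r of primes p_1 >= ... >= p_r (list ps = [p_1,...,p_r])
  with p_1 ... p_{2j} p_{2j+1}^3 <= D for all 0 <= j < r/2.
  In 0-based list indexing, p_{2j+1} = ps ! (2*j), and the condition 2j < r.\<close>
definition upper_sieve_support :: "real \<Rightarrow> nat set" where
  "upper_sieve_support D = {d. \<exists>ps :: nat list.
      (\<forall>p\<in>set ps. prime p) \<and> sorted_wrt (\<ge>) ps \<and> d = prod_list ps \<and>
      (\<forall>j. 2 * j < length ps \<longrightarrow>
          real (prod_list (take (2 * j) ps)) * real (ps ! (2 * j)) ^ 3 \<le> D)}"

end

theory Submission
  imports Defs
begin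

(* Write N = x^n and let x^(e_0) >= x^(e_1) >= ... be the primes of d, so that the support
   condition reads e_0 + ... + e_(2j-1) + 3 e_(2j) <= 7/12 - 50 delta and all four conditions
   become linear in the exponents.  The primes of d_1 are chosen greedily, largest first,
   subject to d_1 <= N / x^delta; the support condition then bounds the exponent sum of the
   remaining primes by 7/12 - 50 delta - (n - delta).  Given d_1, the other three conditions
   only ask that the exponent sum of d_2 lie in a window [L, R] with L <= 1/6 and R >= 1/4.
   Remaining primes of exponent at most 1/12 can be added to d_2 one at a time without jumping
   over the window, and any two heavier ones already exceed 1/6.  The support condition forbids
   three heavier remaining primes whose pairwise sums overflow the window, and the case of
   exactly two such primes is excluded by the greedy choice of d_1. *)

lemma subset_sum_in_window:
  fixes e :: "'a \<Rightarrow> real"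
  assumes "finite S" "\<forall>i\<in>S. 0 \<le> e i \<and> e i \<le> h"
    and "b \<le> R" "L + h \<le> R" "L \<le> b + sum e S"
  shows "\<exists>S'\<subseteq>S. L \<le> b + sum e S' \<and> b + sum e S' \<le> R"
  using assms
proof (induction S rule: finite_induct)
  case (insert a S)
  show ?case
  proof (cases "L \<le> b + sum e S")
    case True
    with insert obtain S' where "S' \<subseteq> S" "L \<le> b + sum e S'" "b + sum e S' \<le> R"
      by auto
    then show ?thesis
      by blast
  next
    case False
    have "b + sum e (insert a S) \<le> R"
      using insert.hyps insert.prems(1,3) False by simp
    with insert.prems(4) show ?thesis
      by (intro exI[of _ "insert a S"]) simp
  qed
qed auto

lemma subset_sum_in_window_insert:
  fixes e :: "'a \<Rightarrow> real"
  assumes "finite S" "\<forall>j\<in>S. 0 \<le> e j \<and> e j \<le> h" "i \<notin> S"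
    and "e i \<le> R" "L + h \<le> R" "L \<le> e i + sum e S"
  shows "\<exists>B\<subseteq>insert i S. L \<le> sum e B \<and> sum e B \<le> R"
proof -
  obtain S' where S': "S' \<subseteq> S" "L \<le> e i + sum e S'" "e i + sum e S' \<le> R"
    using subset_sum_in_window[OF assms(1,2,4-6)] by blast
  moreover have "i \<notin> S'"
    using S'(1) assms(3) by blast
  moreover have "finite S'"
    using S'(1) assms(1) by (rule finite_subset)
  ultimately show ?thesis
    by (intro exI[of _ "insert i S'"]) auto
qed

lemma two_heavy_if_pairs_overflow:
  fixes e :: "nat \<Rightarrow> real"
  assumes triples: "\<And>i j k. i \<in> W \<Longrightarrow> j \<in> W \<Longrightarrow> k \<in> W \<Longrightarrow> i < j \<Longrightarrow> j < k \<Longrightarrow>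
      2 * e j + 3 * e k \<le> 7/12"
    and R: "1/4 \<le> R"
    and H: "H \<subseteq> W" "\<forall>k\<in>H. 1/12 < e k" "\<forall>j\<in>H. \<forall>k\<in>H. j \<noteq> k \<longrightarrow> R < e j + e k"
    and i: "i \<in> H" "\<forall>k\<in>H. i \<le> k" and j: "j \<in> H" "j \<noteq> i"
  shows "H = {i, j}"
proof -
  have "i < j"
    using i(2) j by (simp add: order.not_eq_order_implies_strict)
  have "k = i \<or> k = j" if k: "k \<in> H" for k
  proof (rule ccontr)
    assume "\<not> (k = i \<or> k = j)"
    then have "i < k" "j \<noteq> k"
      using i(2) k by (auto simp: order.not_eq_order_implies_strict)
    have W: "i \<in> W" "j \<in> W" "k \<in> W"
      using H(1) i(1) j(1) k by auto
    have heavy: "1/12 < e j" "1/12 < e k" "R < e j + e k"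
      using H(2,3) j(1) k \<open>j \<noteq> k\<close> by auto
    show False
    proof (cases "j < k")
      case True
      show ?thesis
        using triples[OF W \<open>i < j\<close> True] heavy R by linarith
    next
      case False
      then have "k < j"
        using \<open>j \<noteq> k\<close> by simp
      show ?thesis
        using triples[OF W(1,3,2) \<open>i < k\<close> \<open>k < j\<close>] heavy R by linarith
    qed
  qed
  then show ?thesis
    using i(1) j(1) by blast
qed

lemma least_heavy_plus_light_ge:
  fixes e :: "nat \<Rightarrow> real"
  assumes triples: "\<And>i j k. i \<in> W \<Longrightarrow> j \<in> W \<Longrightarrow> k \<in> W \<Longrightarrow> i < j \<Longrightarrow> j < k \<Longrightarrow>
      2 * e j + 3 * e k \<le> 7/12"
    and pairs: "\<And>i j. i \<in> W \<Longrightarrow> j \<in> W \<Longrightarrow> i < j \<Longrightarrow> R < e i + e j \<Longrightarrow>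
      L \<le> sum e W - e j"
    and R: "1/4 \<le> R" and L: "L \<le> sum e W"
    and H: "H \<subseteq> W" "\<forall>k\<in>H. 1/12 < e k" "\<forall>j\<in>H. \<forall>k\<in>H. j \<noteq> k \<longrightarrow> R < e j + e k"
    and sum_W: "sum e W = sum e H + sum e S"
    and i: "i \<in> H" "\<forall>k\<in>H. i \<le> k"
  shows "L \<le> e i + sum e S"
proof (rule ccontr)
  assume short: "\<not> L \<le> e i + sum e S"
  have "H \<noteq> {i}"
  proof
    assume "H = {i}"
    then show False
      using sum_W L short by simp
  qed
  then obtain j where j: "j \<in> H" "j \<noteq> i"
    using i(1) by blast
  have "H = {i, j}"
    by (rule two_heavy_if_pairs_overflow[OF triples R H i j])
  moreover have "i < j"
    using i(2) j by (simp add: order.not_eq_order_implies_strict)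
  ultimately have "sum e W - e j = e i + sum e S"
    using sum_W by simp
  moreover have "i \<in> W" "j \<in> W" "R < e i + e j"
    using H i(1) j by auto
  ultimately show False
    using pairs[of i j] \<open>i < j\<close> short by linarith
qed

lemma subset_sum_in_window_sparse_heavy:
  fixes e :: "nat \<Rightarrow> real"
  assumes fin: "finite W"
    and bounded: "\<forall>i\<in>W. 0 \<le> e i \<and> e i \<le> R"
    and triples: "\<And>i j k. i \<in> W \<Longrightarrow> j \<in> W \<Longrightarrow> k \<in> W \<Longrightarrow> i < j \<Longrightarrow> j < k \<Longrightarrow>
      2 * e j + 3 * e k \<le> 7/12"
    and pairs: "\<And>i j. i \<in> W \<Longrightarrow> j \<in> W \<Longrightarrow> i < j \<Longrightarrow> R < e i + e j \<Longrightarrow>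
      L \<le> sum e W - e j"
    and L: "L \<le> sum e W" "L \<le> 1/6" and R: "1/4 \<le> R"
  shows "\<exists>B\<subseteq>W. L \<le> sum e B \<and> sum e B \<le> R"
proof -
  define H where "H = {i\<in>W. 1/12 < e i}"
  define S where "S = W - H"
  have "H \<subseteq> W" and heavy: "\<forall>k\<in>H. 1/12 < e k"
    unfolding H_def by auto
  have "finite H" "finite S"
    unfolding S_def using \<open>H \<subseteq> W\<close> fin by (auto intro: finite_subset)
  have light: "\<forall>i\<in>S. 0 \<le> e i \<and> e i \<le> 1/12"
    unfolding S_def H_def using bounded by auto
  have sum_W: "sum e W = sum e H + sum e S"
    unfolding S_def using sum.subset_diff[OF \<open>H \<subseteq> W\<close> fin, of e] by linarith
  show ?thesis
  proof (cases "\<exists>j\<in>H. \<exists>k\<in>H. j \<noteq> k \<and> e j + e k \<le> R")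
    case True
    then obtain j k where jk: "j \<in> H" "k \<in> H" "j \<noteq> k" "e j + e k \<le> R"
      by blast
    then have "{j, k} \<subseteq> W" "sum e {j, k} = e j + e k" "1/6 < e j + e k"
      unfolding H_def by auto
    then show ?thesis
      using jk(4) L(2) by (intro exI[of _ "{j, k}"]) auto
  next
    case False
    then have overflow: "\<forall>j\<in>H. \<forall>k\<in>H. j \<noteq> k \<longrightarrow> R < e j + e k"
      by (auto simp: not_le)
    show ?thesis
    proof (cases "H = {}")
      case True
      then have "S = W"
        unfolding S_def by simp
      then show ?thesis
        using subset_sum_in_window[of S e "1/12" 0 R L] \<open>finite S\<close> light L R by auto
    next
      case False
      define i where "i = Min H"
      have i: "i \<in> H" "\<forall>k\<in>H. i \<le> k"
        unfolding i_def using False \<open>finite H\<close> by auto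
      have fill: "L \<le> e i + sum e S"
        using least_heavy_plus_light_ge[OF triples pairs R L(1) \<open>H \<subseteq> W\<close> heavy overflow sum_W i] .
      have "i \<notin> S" "e i \<le> R" "insert i S \<subseteq> W"
        using bounded i(1) \<open>H \<subseteq> W\<close> unfolding S_def H_def by auto
      moreover have "L + 1/12 \<le> R"
        using L R by linarith
      ultimately show ?thesis
        using subset_sum_in_window_insert[OF \<open>finite S\<close> light _ _ _ fill] by (meson subset_trans)
    qed
  qed
qed

fun greedy_fill :: "(nat \<Rightarrow> real) \<Rightarrow> real \<Rightarrow> nat \<Rightarrow> nat set" where
  "greedy_fill e U 0 = {}"
| "greedy_fill e U (Suc m) =
     (if sum e (greedy_fill e U m) + e m \<le> U then insert m (greedy_fill e U m)
      else greedy_fill e U m)"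

lemma greedy_fill_subset: "greedy_fill e U m \<subseteq> {..<m}"
  by (induction m) auto

lemma finite_greedy_fill [simp]: "finite (greedy_fill e U m)"
  by (rule finite_subset[OF greedy_fill_subset]) simp

lemma sum_greedy_fill_le:
  assumes "0 \<le> U"
  shows "sum e (greedy_fill e U m) \<le> U"
proof (induction m)
  case (Suc m)
  have "m \<notin> greedy_fill e U m"
    using greedy_fill_subset by blast
  with Suc show ?case
    by auto
qed (simp add: assms)

lemma greedy_fill_Int_lessThan:
  "i \<le> m \<Longrightarrow> greedy_fill e U m \<inter> {..<i} = greedy_fill e U i"
proof (induction m)
  case (Suc m)
  show ?case
  proof (cases "i = Suc m")
    case True
    then show ?thesis
      using greedy_fill_subset by blast
  next
    case False
    then have "i \<le> m"
      using Suc.prems by simp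
    then show ?thesis
      using Suc.IH by auto
  qed
qed simp

lemma greedy_fill_rejected:
  assumes "i < m" "i \<notin> greedy_fill e U m"
  shows "U < sum e (greedy_fill e U i) + e i"
proof -
  have "greedy_fill e U (Suc i) = greedy_fill e U m \<inter> {..<Suc i}"
    using greedy_fill_Int_lessThan assms(1) by simp
  then have "i \<notin> greedy_fill e U (Suc i)"
    using assms(2) by blast
  then show ?thesis
    by (auto split: if_splits)
qed

(* e i stands for log p / log x, where p is the (i+1)-st largest prime of d (0-based, as in Defs). *)
locale sieve_exponents =
  fixes \<theta> :: real and r :: nat and e :: "nat \<Rightarrow> real"
  assumes nonneg: "i < r \<Longrightarrow> 0 \<le> e i"
    and antimono: "i \<le> j \<Longrightarrow> j < r \<Longrightarrow> e j \<le> e i"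
    and sieve_bound: "2 * j < r \<Longrightarrow> (\<Sum>i<2 * j. e i) + 3 * e (2 * j) \<le> \<theta>"
begin

lemma prefix_sum_plus_double_le:
  assumes "m < r"
  shows "(\<Sum>i<m. e i) + 2 * e m \<le> \<theta>"
proof -
  define j where "j = m div 2"
  show ?thesis
  proof (cases "even m")
    case True
    then have "m = 2 * j"
      unfolding j_def by simp
    with assms sieve_bound[of j] nonneg[of m] show ?thesis
      by simp
  next
    case False
    then have m: "m = Suc (2 * j)"
      unfolding j_def by presburger
    have "(\<Sum>i<m. e i) = (\<Sum>i<2 * j. e i) + e (2 * j)"
      by (simp add: m)
    moreover have "e m \<le> e (2 * j)"
      using antimono assms m by simp
    ultimately show ?thesis
      using sieve_bound[of j] assms m by simp
  qed
qed

lemma top_three_le: "2 < r \<Longrightarrow> e 0 + e 1 + 3 * e 2 \<le> \<theta>"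
  using sieve_bound[of 1] by (simp add: numeral_2_eq_2)

lemma triple_le: "i < r \<Longrightarrow> 3 * e i \<le> \<theta>"
  using sieve_bound[of 0] antimono[of 0 i] by simp

lemma double_plus_triple_le:
  assumes "0 < j" "j < k" "k < r"
  shows "2 * e j + 3 * e k \<le> \<theta>"
proof -
  have "e 0 + e 1 + 3 * e 2 \<le> \<theta>"
    using top_three_le assms by simp
  moreover have "e j \<le> e 1" "e 1 \<le> e 0" "e k \<le> e 2"
    using antimono[of 1 j] antimono[of 0 1] antimono[of 2 k] assms by simp_all
  ultimately show ?thesis
    by linarith
qed

lemma heavy_index_lt_two:
  assumes "i < r" "\<theta> < 5 * e i"
  shows "i < 2"
proof (rule ccontr)
  assume "\<not> i < 2"
  then have "e 0 + e 1 + 3 * e 2 \<le> \<theta>"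
    using top_three_le assms(1) by simp
  moreover have "e i \<le> e 2" "e 2 \<le> e 1" "e 1 \<le> e 0"
    using antimono[of 2 i] antimono[of 1 2] antimono[of 0 1] assms(1) \<open>\<not> i < 2\<close> by auto
  ultimately show False
    using assms(2) by linarith
qed

lemma unselected_prefix_sum_gt:
  assumes "i < r" "i \<notin> greedy_fill e U r"
  shows "U < (\<Sum>l<i. e l) + e i"
proof -
  have "sum e (greedy_fill e U i) \<le> (\<Sum>l<i. e l)"
    using greedy_fill_subset nonneg assms(1) by (intro sum_mono2) auto
  then show ?thesis
    using greedy_fill_rejected[OF assms] by linarith
qed

lemma sum_unselected_le:
  assumes "U \<le> \<theta>"
  shows "sum e ({..<r} - greedy_fill e U r) \<le> \<theta> - U"
proof (cases "{..<r} - greedy_fill e U r = {}")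
  case False
  define G where "G = greedy_fill e U r"
  define W where "W = {..<r} - G"
  define k where "k = Max W"
  have "k \<in> W"
    using False unfolding k_def W_def G_def by (intro Max_in) auto
  then have k: "k < r" "k \<notin> G"
    unfolding W_def by auto
  have "finite W"
    unfolding W_def by simp
  then have "\<forall>w\<in>W. w \<le> k"
    unfolding k_def by simp
  with \<open>k \<in> W\<close> have "W = insert k (W \<inter> {..<k})"
    by (auto simp: order.order_iff_strict)
  then have "sum e W = e k + sum e (W \<inter> {..<k})"
    using sum.insert[of "W \<inter> {..<k}" k e] by simp
  moreover have "{..<k} = G \<inter> {..<k} \<union> W \<inter> {..<k}"
    using k(1) unfolding W_def by auto
  then have "sum e {..<k} = sum e (G \<inter> {..<k}) + sum e (W \<inter> {..<k})"
    using sum.union_disjoint[of "G \<inter> {..<k}" "W \<inter> {..<k}" e] unfolding W_def by auto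
  moreover have "G \<inter> {..<k} = greedy_fill e U k"
    unfolding G_def using k(1) by (simp add: greedy_fill_Int_lessThan)
  moreover have "U < sum e (greedy_fill e U k) + e k"
    using greedy_fill_rejected k unfolding G_def by blast
  ultimately show ?thesis
    using prefix_sum_plus_double_le[OF k(1)] unfolding W_def G_def by auto
next
  case True
  show ?thesis
    unfolding True using assms by simp
qed

(* Since e i > 1/8, the support condition forces i <= 1, and i was rejected because
   e 0 + ... + e i > n - delta. *)
lemma unselected_pair_bound:
  assumes \<theta>: "\<theta> = 7/12 - 50 * \<delta>" and \<delta>: "0 < \<delta>" "\<delta> < 1/1000"
    and n: "2 * \<delta> \<le> n" "n \<le> 1/3 + \<delta>/2"
    and ij: "i < j" "j < r" "i \<notin> greedy_fill e (n - \<delta>) r" "j \<notin> greedy_fill e (n - \<delta>) r"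
    and heavy: "1/4 < e i + e j"
  shows "sum e ({..<r} - greedy_fill e (n - \<delta>) r) + e j \<le> 1 - 2 * n - \<delta>"
proof (rule ccontr)
  define W where "W = {..<r} - greedy_fill e (n - \<delta>) r"
  assume "\<not> sum e ({..<r} - greedy_fill e (n - \<delta>) r) + e j \<le> 1 - 2 * n - \<delta>"
  then have contra: "1 - 2 * n - \<delta> < sum e W + e j"
    unfolding W_def by simp
  have "n - \<delta> \<le> \<theta>"
    using \<theta> \<delta> n by linarith
  then have t: "sum e W \<le> \<theta> - (n - \<delta>)"
    unfolding W_def by (rule sum_unselected_le)
  have "i \<in> W" "j \<in> W" "finite W"
    unfolding W_def using ij by auto
  then have "sum e W = e i + sum e (W - {i})" "sum e (W - {i}) = e j + sum e (W - {i} - {j})"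
    using ij(1) sum.remove[of W i e] sum.remove[of "W - {i}" j e] by auto
  then have split: "sum e W = e i + e j + sum e (W - {i, j})"
    by (simp add: Diff_insert2[symmetric])
  have rest: "0 \<le> sum e (W - {i, j})"
    unfolding W_def using nonneg by (intro sum_nonneg) auto
  have "e j \<le> e i"
    using antimono ij by simp
  then have "i < 2"
    using heavy_index_lt_two[of i] ij heavy \<theta> \<delta> by simp
  have prefix: "n - \<delta> < (\<Sum>l<i. e l) + e i"
    using unselected_prefix_sum_gt ij by simp
  show False
  proof (cases "i = 0")
    case True
    then show ?thesis
      using prefix contra t split rest \<open>e j \<le> e i\<close> \<theta> \<delta> n by simp
  next
    case False
    with \<open>i < 2\<close> have "i = 1"
      by simp
    then have "e 0 + e 1 + 3 * e 2 \<le> \<theta>" "e j \<le> e 2"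
      using top_three_le antimono[of 2 j] ij by auto
    then show ?thesis
      using \<open>i = 1\<close> prefix contra t \<theta> \<delta> n by simp
  qed
qed

lemma exponent_partition:
  assumes \<theta>: "\<theta> = 7/12 - 50 * \<delta>" and \<delta>: "0 < \<delta>" "\<delta> < 1/1000"
    and n: "2 * \<delta> \<le> n" "n \<le> 1/3 + \<delta>/2"
  obtains A B where "A \<subseteq> {..<r}" "B \<subseteq> {..<r} - A" "sum e A \<le> n - \<delta>"
    "2 * n + sum e B + 2 * sum e ({..<r} - A - B) \<le> 1 - \<delta>"
    "2 * n + sum e A + 4 * sum e B + 3 * sum e ({..<r} - A - B) \<le> 2 - \<delta>"
    "n + sum e A + 5 * sum e B + 2 * sum e ({..<r} - A - B) \<le> 2 - \<delta>"
proof -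
  define A where "A = greedy_fill e (n - \<delta>) r"
  define W where "W = {..<r} - A"
  \<comment> \<open>With C = W - B, the last three inequalities say exactly L \<le> sum e B \<le> R.\<close>
  define L where "L = 2 * sum e W + 2 * n - 1 + \<delta>"
  define R where "R = min (2 - \<delta> - 2 * n - sum e A - 3 * sum e W)
    ((2 - \<delta> - n - sum e A - 2 * sum e W) / 3)"
  have a: "sum e A \<le> n - \<delta>"
    unfolding A_def using sum_greedy_fill_le n \<delta> by simp
  have "n - \<delta> \<le> \<theta>"
    using \<theta> \<delta> n by linarith
  then have t: "sum e W \<le> \<theta> - (n - \<delta>)"
    unfolding W_def A_def by (rule sum_unselected_le)
  have L: "L \<le> sum e W" "L \<le> 1/6" and R: "1/4 \<le> R"
    unfolding R_def L_def using a t \<theta> \<delta> n by auto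
  have "\<exists>B\<subseteq>W. L \<le> sum e B \<and> sum e B \<le> R"
  proof (rule subset_sum_in_window_sparse_heavy[OF _ _ _ _ L R])
    show "finite W"
      unfolding W_def by simp
    show "\<forall>i\<in>W. 0 \<le> e i \<and> e i \<le> R"
      unfolding W_def using nonneg triple_le R \<theta> \<delta> by force
    show "2 * e j + 3 * e k \<le> 7/12" if "i \<in> W" "j \<in> W" "k \<in> W" "i < j" "j < k" for i j k
      using double_plus_triple_le[of j k] that \<theta> \<delta> unfolding W_def by auto
    show "L \<le> sum e W - e j" if "i \<in> W" "j \<in> W" "i < j" "R < e i + e j" for i j
      using unselected_pair_bound[OF \<theta> \<delta> n, of i j] that R
      unfolding L_def W_def A_def by auto
  qed
  then obtain B where B: "B \<subseteq> W" "L \<le> sum e B" "sum e B \<le> R"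
    by blast
  have "sum e ({..<r} - A - B) = sum e W - sum e B"
    using B(1) unfolding W_def by (simp add: Diff_Diff_Int sum_diff)
  then show ?thesis
    using that[of A B] B a greedy_fill_subset unfolding W_def L_def R_def A_def
    by (auto simp: min_def split: if_splits)
qed

end

lemma prod_list_take_eq_prod_nth:
  "k \<le> length xs \<Longrightarrow> prod_list (take k xs) = (\<Prod>i<k. xs ! i)"
  by (simp add: prod.list_conv_set_nth atLeast0LessThan min_absorb2)

lemma prod_list_eq_prod_nth_partition:
  fixes xs :: "'a :: comm_monoid_mult list"
  assumes "A \<subseteq> {..<length xs}" "B \<subseteq> {..<length xs} - A"
  shows "prod_list xs =
    (\<Prod>i\<in>A. xs ! i) * (\<Prod>i\<in>B. xs ! i) * (\<Prod>i\<in>{..<length xs} - A - B. xs ! i)"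
proof -
  define C where "C = {..<length xs} - A - B"
  have fin: "finite A" "finite B" "finite C"
    using assms unfolding C_def by (auto intro: finite_subset[of _ "{..<length xs}"])
  have split: "{..<length xs} = (A \<union> B) \<union> C"
    using assms unfolding C_def by auto
  have "(\<Prod>i<length xs. xs ! i) = (\<Prod>i\<in>A \<union> B. xs ! i) * (\<Prod>i\<in>C. xs ! i)"
    unfolding split using fin by (intro prod.union_disjoint) (auto simp: C_def)
  also have "(\<Prod>i\<in>A \<union> B. xs ! i) = (\<Prod>i\<in>A. xs ! i) * (\<Prod>i\<in>B. xs ! i)"
    using fin assms(2) by (intro prod.union_disjoint) auto
  finally show ?thesis
    using prod_list_take_eq_prod_nth[of "length xs" xs] unfolding C_def by simp
qed

lemma prod_eq_powr_sum:
  fixes x :: real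
  assumes "x \<noteq> 0" "\<And>i. i \<in> I \<Longrightarrow> f i = x powr e i"
  shows "prod f I = x powr sum e I"
  unfolding powr_sum[OF assms(1)] using assms(2) by (rule prod.cong[OF refl])

lemma sieve_exponents_log_primes:
  assumes x: "1 < x" and primes: "\<forall>p\<in>set ps. prime p" and sorted: "sorted_wrt (\<ge>) ps"
    and bound: "\<forall>j. 2 * j < length ps \<longrightarrow>
      real (prod_list (take (2 * j) ps)) * real (ps ! (2 * j)) ^ 3 \<le> x powr \<theta>"
  shows "sieve_exponents \<theta> (length ps) (\<lambda>i. log x (ps ! i))"
proof
  have pos: "0 < ps ! i" if "i < length ps" for i
    using primes prime_gt_0_nat that by simp
  then have ps: "real (ps ! i) = x powr log x (ps ! i)" if "i < length ps" for i
    using x that by simp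
  show "0 \<le> log x (ps ! i)" if "i < length ps" for i
    using x pos[OF that] by (simp add: Suc_le_eq)
  show "log x (ps ! j) \<le> log x (ps ! i)" if "i \<le> j" "j < length ps" for i j
  proof -
    have "ps ! j \<le> ps ! i"
      using sorted_wrt_nth_less[OF sorted, of i j] that by (cases "i = j") auto
    then show ?thesis
      using x pos that by simp
  qed
  show "(\<Sum>i<2 * j. log x (ps ! i)) + 3 * log x (ps ! (2 * j)) \<le> \<theta>" if j: "2 * j < length ps" for j
  proof -
    have "real (prod_list (take (2 * j) ps)) = x powr (\<Sum>i<2 * j. log x (ps ! i))"
      unfolding prod_list_take_eq_prod_nth[of "2 * j" ps, OF less_imp_le[OF j]] of_nat_prod
      using x j ps by (intro prod_eq_powr_sum) auto
    moreover have "real (ps ! (2 * j)) ^ 3 = x powr (3 * log x (ps ! (2 * j)))"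
      using x ps[OF j] powr_power[of x "log x (ps ! (2 * j))" 3] by simp
    ultimately have "x powr ((\<Sum>i<2 * j. log x (ps ! i)) + 3 * log x (ps ! (2 * j))) =
        real (prod_list (take (2 * j) ps)) * real (ps ! (2 * j)) ^ 3"
      by (simp add: powr_add)
    also have "\<dots> \<le> x powr \<theta>"
      using bound j by blast
    finally show ?thesis
      using x by simp
  qed
qed

lemma factorization_of_index_partition:
  fixes x n \<delta> :: real and e :: "nat \<Rightarrow> real"
  assumes x: "1 < x" and ps: "\<And>i. i < length ps \<Longrightarrow> real (ps ! i) = x powr e i"
    and A: "A \<subseteq> {..<length ps}" and B: "B \<subseteq> {..<length ps} - A"
    and C: "C = {..<length ps} - A - B"
    and ineqs: "sum e A \<le> n - \<delta>" "2 * n + sum e B + 2 * sum e C \<le> 1 - \<delta>"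
      "2 * n + sum e A + 4 * sum e B + 3 * sum e C \<le> 2 - \<delta>"
      "n + sum e A + 5 * sum e B + 2 * sum e C \<le> 2 - \<delta>"
  shows "\<exists>d1 d2 d3 :: nat. d1 > 0 \<and> d2 > 0 \<and> d3 > 0 \<and> prod_list ps = d1 * d2 * d3 \<and>
    real d1 \<le> x powr n / x powr \<delta> \<and>
    (x powr n)^2 * real d2 * real d3 ^ 2 \<le> x powr (1 - \<delta>) \<and>
    (x powr n)^2 * real d1 * real d2 ^ 4 * real d3 ^ 3 \<le> x powr (2 - \<delta>) \<and>
    x powr n * real d1 * real d2 ^ 5 * real d3 ^ 2 \<le> x powr (2 - \<delta>)"
proof -
  define d1 d2 d3 where "d1 = (\<Prod>i\<in>A. ps ! i)" and "d2 = (\<Prod>i\<in>B. ps ! i)"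
    and "d3 = (\<Prod>i\<in>C. ps ! i)"
  have "B \<subseteq> {..<length ps}" "C \<subseteq> {..<length ps}"
    using B C by auto
  with A have d: "real d1 = x powr sum e A" "real d2 = x powr sum e B" "real d3 = x powr sum e C"
    unfolding d1_def d2_def d3_def of_nat_prod using x by (auto intro!: prod_eq_powr_sum ps)
  then have "0 < real d1" "0 < real d2" "0 < real d3"
    using x by simp_all
  then have "0 < d1" "0 < d2" "0 < d3"
    by simp_all
  moreover have "prod_list ps = d1 * d2 * d3"
    unfolding d1_def d2_def d3_def C using prod_list_eq_prod_nth_partition[OF A B] .
  moreover have "real d1 \<le> x powr n / x powr \<delta>"
    using d ineqs(1) x by (simp flip: powr_diff)
  moreover have "(x powr n)^2 * real d2 * real d3 ^ 2 = x powr (2 * n + sum e B + 2 * sum e C)"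
    "(x powr n)^2 * real d1 * real d2 ^ 4 * real d3 ^ 3 =
      x powr (2 * n + sum e A + 4 * sum e B + 3 * sum e C)"
    "x powr n * real d1 * real d2 ^ 5 * real d3 ^ 2 =
      x powr (n + sum e A + 5 * sum e B + 2 * sum e C)"
    unfolding d using x by (simp_all add: powr_power powr_add mult_ac)
  ultimately show ?thesis
    using ineqs(2-4) x by (intro exI[of _ d1] exI[of _ d2] exI[of _ d3]) simp
qed

lemma upper_sieve_support_factorization:
  fixes x N \<delta> :: real
  assumes x: "1 < x" and \<delta>: "0 < \<delta>" "\<delta> < 1/1000"
    and N: "x powr (2 * \<delta>) \<le> N" "N \<le> x powr (1/3 + \<delta>/2)"
    and d: "d \<in> upper_sieve_support (x powr (7/12 - 50 * \<delta>))"
  shows "\<exists>d1 d2 d3 :: nat. d1 > 0 \<and> d2 > 0 \<and> d3 > 0 \<and> d = d1 * d2 * d3 \<and>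
    real d1 \<le> N / x powr \<delta> \<and>
    N^2 * real d2 * real d3 ^ 2 \<le> x powr (1 - \<delta>) \<and>
    N^2 * real d1 * real d2 ^ 4 * real d3 ^ 3 \<le> x powr (2 - \<delta>) \<and>
    N * real d1 * real d2 ^ 5 * real d3 ^ 2 \<le> x powr (2 - \<delta>)"
proof -
  obtain ps where primes: "\<forall>p\<in>set ps. prime p" and sorted: "sorted_wrt (\<ge>) ps"
    and "d = prod_list ps" and bound: "\<forall>j. 2 * j < length ps \<longrightarrow>
      real (prod_list (take (2 * j) ps)) * real (ps ! (2 * j)) ^ 3 \<le> x powr (7/12 - 50 * \<delta>)"
    using d unfolding upper_sieve_support_def by blast
  define e where "e i = log x (ps ! i)" for i
  interpret sieve_exponents "7/12 - 50 * \<delta>" "length ps" e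
    unfolding e_def by (rule sieve_exponents_log_primes[OF x primes sorted bound])
  have "0 < N"
    using N(1) x powr_gt_zero[of x "2 * \<delta>"] by linarith
  then have N_eq: "N = x powr log x N"
    using x by simp
  then have "2 * \<delta> \<le> log x N" "log x N \<le> 1/3 + \<delta>/2"
    using N x by (metis powr_le_cancel_iff)+
  then obtain A B where "A \<subseteq> {..<length ps}" "B \<subseteq> {..<length ps} - A"
    "sum e A \<le> log x N - \<delta>"
    "2 * log x N + sum e B + 2 * sum e ({..<length ps} - A - B) \<le> 1 - \<delta>"
    "2 * log x N + sum e A + 4 * sum e B + 3 * sum e ({..<length ps} - A - B) \<le> 2 - \<delta>"
    "log x N + sum e A + 5 * sum e B + 2 * sum e ({..<length ps} - A - B) \<le> 2 - \<delta>"
    by (rule exponent_partition[OF refl \<delta>])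
  moreover have "real (ps ! i) = x powr e i" if "i < length ps" for i
    unfolding e_def using x primes prime_gt_0_nat that by simp
  ultimately show ?thesis
    using factorization_of_index_partition[OF x, of ps e] N_eq \<open>d = prod_list ps\<close> by metis
qed

theorem proposition9p1:
  fixes \<delta> :: real
  assumes "0 < \<delta>" and "\<delta> < 1/1000"
  shows "\<exists>x0. \<forall>x N :: real. \<forall>d :: nat.
    x \<ge> x0 \<longrightarrow> x powr (2*\<delta>) \<le> N \<longrightarrow> N \<le> x powr (1/3 + \<delta>/2) \<longrightarrow>
    d \<in> upper_sieve_support (x powr (7/12 - 50*\<delta>)) \<longrightarrow>
    (\<exists>d1 d2 d3 :: nat. d1 > 0 \<and> d2 > 0 \<and> d3 > 0 \<and> d = d1 * d2 * d3 \<and>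
       real d1 \<le> N / x powr \<delta> \<and>
       N^2 * real d2 * real d3 ^ 2 \<le> x powr (1 - \<delta>) \<and>
       N^2 * real d1 * real d2 ^ 4 * real d3 ^ 3 \<le> x powr (2 - \<delta>) \<and>
       N * real d1 * real d2 ^ 5 * real d3 ^ 2 \<le> x powr (2 - \<delta>))"
  using upper_sieve_support_factorization[OF _ assms] by (intro exI[of _ 2]) auto

end
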